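(* Let $U,V$ be molecules, $F\colon\mathsf{Mol}/U\to\mathsf{Mol}/V$ an active strict functor, and $\iota\colon W\sqsubseteq U$ a submolecule (regarded as an arrow of $\mathsf{Mol}/U$). Then the pasting diagram $F(\iota)\colon F(W)\to V$ is a submolecule inclusion.
   Context: Oriented graded posets: graded posets with, for each $x$, a partition of the elements covered by $x$ into input faces $\partial^-x$ and output faces $\partial^+x$; morphisms induce bijections on input/output faces; embeddings are injective morphisms. Molecules are Hadzihasanovic's class generated from the point $\mathbf{1}$ under pasting $U\#_kV$ (pushout along an isomorphism $\partial_k^+U\cong\partial_k^-V$ of boundaries) and under $U\Rightarrow V$ for round molecules of equal dimension with matching boundaries. Submolecule inclusions form the smallest class of embeddings of molecules containing isomorphisms, closed under composition, and containing $U\hookrightarrow U\#_kV$ and $V\hookrightarrow U\#_kV$; $W\sqsubseteq U$ means the inclusion of $W$ is one. $\mathsf{Mol}/U$ is the strict $\omega$-category whose $k$-arrows are morphisms $W\to U$ of oriented graded posets from $k$-dimensional molecules (pasting diagrams, up to unique isomorphism), boundaries by restriction, composition by pasting; the arrow $F(\iota)$ is written $F(W)\to V$. A strict functor $F\colon\mathsf{Mol}/U\to\mathsf{Mol}/V$ is active if $F(\mathrm{id}_U)=\mathrm{id}_V$. *)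

theory Defs
  imports Main
begin

datatype sgn = Mn | Pl

fun neg :: "sgn \<Rightarrow> sgn" where
  "neg Mn = Pl" | "neg Pl = Mn"

text \<open>An oriented graded poset is presented by its (finite) set of elements and,
  for each element x, its input faces and output faces (the elements covered by x,
  partitioned into inputs and outputs). The partial order is the reflexive-transitive
  closure of the face relation.\<close>

record 'a ogp =
  els  :: "'a set"
  inp  :: "'a \<Rightarrow> 'a set"
  outp :: "'a \<Rightarrow> 'a set"

definition faces_s :: "sgn \<Rightarrow> 'a ogp \<Rightarrow> 'a \<Rightarrow> 'a set" where
  "faces_s a P x = (case a of Mn \<Rightarrow> inp P x | Pl \<Rightarrow> outp P x)"

definition faces :: "'a ogp \<Rightarrow> 'a \<Rightarrow> 'a set" where
  "faces P x = inp P x \<union> outp P x"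

text \<open>Grading: minimal elements have dimension 0 and each covering step raises it by 1.
  Together with finiteness this says the poset is graded and that the face relation is
  exactly its covering relation.\<close>
definition grading :: "'a ogp \<Rightarrow> ('a \<Rightarrow> nat) \<Rightarrow> bool" where
  "grading P d \<longleftrightarrow> (\<forall>x\<in>els P. (faces P x = {} \<longrightarrow> d x = 0) \<and>
                                 (\<forall>y\<in>faces P x. d x = Suc (d y)))"

definition ogpos :: "'a ogp \<Rightarrow> bool" where
  "ogpos P \<longleftrightarrow> finite (els P) \<and>
     (\<forall>x\<in>els P. faces P x \<subseteq> els P \<and> inp P x \<inter> outp P x = {}) \<and>
     (\<forall>x. x \<notin> els P \<longrightarrow> faces P x = {}) \<and>
     (\<exists>d. grading P d)"

definition dim :: "'a ogp \<Rightarrow> 'a \<Rightarrow> nat" where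
  "dim P = (SOME d. grading P d)"

definition pdim :: "'a ogp \<Rightarrow> nat" where
  "pdim P = Max (dim P ` els P)"

definition facerel :: "'a ogp \<Rightarrow> ('a \<times> 'a) set" where
  "facerel P = {(y, x). x \<in> els P \<and> y \<in> faces P x}"

definition cl :: "'a ogp \<Rightarrow> 'a set \<Rightarrow> 'a set" where
  "cl P S = {y. \<exists>x\<in>S. (y, x) \<in> (facerel P)\<^sup>*}"

definition closed_in :: "'a ogp \<Rightarrow> 'a set \<Rightarrow> bool" where
  "closed_in P A \<longleftrightarrow> A \<subseteq> els P \<and> (\<forall>x\<in>A. faces P x \<subseteq> A)"

definition restr :: "'a ogp \<Rightarrow> 'a set \<Rightarrow> 'a ogp" where
  "restr P A = \<lparr> els = A,
                 inp = (\<lambda>x. if x \<in> A then inp P x else {}),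
                 outp = (\<lambda>x. if x \<in> A then outp P x else {}) \<rparr>"

definition maxel :: "'a ogp \<Rightarrow> 'a set" where
  "maxel P = {x \<in> els P. \<forall>y\<in>els P. x \<notin> faces P y}"

definition Delta :: "sgn \<Rightarrow> nat \<Rightarrow> 'a ogp \<Rightarrow> 'a set" where
  "Delta a n P = {x \<in> els P. dim P x = n \<and> (\<forall>y\<in>els P. x \<notin> faces_s (neg a) P y)}"

definition bd :: "sgn \<Rightarrow> nat \<Rightarrow> 'a ogp \<Rightarrow> 'a set" where
  "bd a n P = cl P (Delta a n P) \<union> cl P {x \<in> maxel P. dim P x < n}"

text \<open>The (dim P - 1)-boundary, empty for 0-dimensional P (convention boundary_{-1} = {}).\<close>
definition bdry :: "sgn \<Rightarrow> 'a ogp \<Rightarrow> 'a set" where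
  "bdry a P = (if pdim P = 0 then {} else bd a (pdim P - 1) P)"

definition round :: "'a ogp \<Rightarrow> bool" where
  "round P \<longleftrightarrow> (\<forall>n < pdim P. bd Mn n P \<inter> bd Pl n P =
       (if n = 0 then {} else bd Mn (n - 1) P \<union> bd Pl (n - 1) P))"

text \<open>P is (internally) the pasting A #_k B: the pushout of A and B along
  boundary^+_k A = boundary^-_k B.\<close>
definition is_paste :: "nat \<Rightarrow> 'a ogp \<Rightarrow> 'a set \<Rightarrow> 'a set \<Rightarrow> bool" where
  "is_paste k P A B \<longleftrightarrow> closed_in P A \<and> closed_in P B \<and> A \<union> B = els P \<and>
      A \<inter> B = bd Pl k (restr P A) \<and> A \<inter> B = bd Mn k (restr P B)"

inductive molecule :: "'a ogp \<Rightarrow> bool" where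
  point: "ogpos P \<Longrightarrow> els P = {x} \<Longrightarrow> faces P x = {} \<Longrightarrow> molecule P"
| paste: "ogpos P \<Longrightarrow> is_paste k P A B \<Longrightarrow> molecule (restr P A) \<Longrightarrow>
          molecule (restr P B) \<Longrightarrow> molecule P"
| rewrite: "ogpos P \<Longrightarrow> t \<in> els P \<Longrightarrow> closed_in P A \<Longrightarrow> closed_in P B \<Longrightarrow>
          A \<union> B = els P - {t} \<Longrightarrow>
          molecule (restr P A) \<Longrightarrow> molecule (restr P B) \<Longrightarrow>
          round (restr P A) \<Longrightarrow> round (restr P B) \<Longrightarrow>
          pdim (restr P A) = n \<Longrightarrow> pdim (restr P B) = n \<Longrightarrow>
          bdry Mn (restr P A) = bdry Mn (restr P B) \<Longrightarrow>
          bdry Pl (restr P A) = bdry Pl (restr P B) \<Longrightarrow>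
          A \<inter> B = bdry Mn (restr P A) \<union> bdry Pl (restr P A) \<Longrightarrow>
          inp P t = {x \<in> A. dim P x = n} \<Longrightarrow> outp P t = {x \<in> B. dim P x = n} \<Longrightarrow>
          molecule P"

definition ogmorph :: "'a ogp \<Rightarrow> ('a \<Rightarrow> 'b) \<Rightarrow> 'b ogp \<Rightarrow> bool" where
  "ogmorph P f Q \<longleftrightarrow> (\<forall>x\<in>els P. f x \<in> els Q \<and>
        bij_betw f (inp P x) (inp Q (f x)) \<and> bij_betw f (outp P x) (outp Q (f x)))"

definition ogiso :: "'a ogp \<Rightarrow> ('a \<Rightarrow> 'b) \<Rightarrow> 'b ogp \<Rightarrow> bool" where
  "ogiso P f Q \<longleftrightarrow> ogmorph P f Q \<and> bij_betw f (els P) (els Q)"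

inductive subincl :: "'a ogp \<Rightarrow> ('a \<Rightarrow> 'a) \<Rightarrow> 'a ogp \<Rightarrow> bool" where
  iso: "molecule W \<Longrightarrow> molecule U \<Longrightarrow> ogiso W f U \<Longrightarrow> subincl W f U"
| comp: "subincl W f X \<Longrightarrow> subincl X g U \<Longrightarrow> subincl W (g \<circ> f) U"
| inl: "ogpos P \<Longrightarrow> is_paste k P A B \<Longrightarrow> molecule (restr P A) \<Longrightarrow>
        molecule (restr P B) \<Longrightarrow> subincl (restr P A) id P"
| inr: "ogpos P \<Longrightarrow> is_paste k P A B \<Longrightarrow> molecule (restr P A) \<Longrightarrow>
        molecule (restr P B) \<Longrightarrow> subincl (restr P B) id P"

section \<open>The strict omega-category Mol/U (cells represented up to isomorphism over U)\<close>

type_synonym ('a, 'b) pd = "'a ogp \<times> ('a \<Rightarrow> 'b)"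

definition cell :: "'b ogp \<Rightarrow> ('a, 'b) pd \<Rightarrow> bool" where
  "cell U D \<longleftrightarrow> molecule (fst D) \<and> ogmorph (fst D) (snd D) U"

definition isoover :: "('a, 'b) pd \<Rightarrow> ('a, 'b) pd \<Rightarrow> bool" where
  "isoover D E \<longleftrightarrow> (\<exists>\<phi>. ogiso (fst D) \<phi> (fst E) \<and>
                       (\<forall>x\<in>els (fst D). snd E (\<phi> x) = snd D x))"

definition bdcell :: "sgn \<Rightarrow> nat \<Rightarrow> ('a, 'b) pd \<Rightarrow> ('a, 'b) pd" where
  "bdcell a k D = (restr (fst D) (bd a k (fst D)), snd D)"

definition composite :: "'b ogp \<Rightarrow> nat \<Rightarrow> ('a, 'b) pd \<Rightarrow> ('a, 'b) pd \<Rightarrow> ('a, 'b) pd \<Rightarrow> bool" where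
  "composite U k H D1 D2 \<longleftrightarrow> cell U H \<and> cell U D1 \<and> cell U D2 \<and>
     (\<exists>A B. is_paste k (fst H) A B \<and>
            isoover (restr (fst H) A, snd H) D1 \<and> isoover (restr (fst H) B, snd H) D2)"

text \<open>A strict functor Mol/U -> Mol/V, given on representatives (pasting diagrams on nat).\<close>
definition strict_functor ::
  "'b ogp \<Rightarrow> 'c ogp \<Rightarrow> ((nat, 'b) pd \<Rightarrow> (nat, 'c) pd) \<Rightarrow> bool" where
  "strict_functor U V F \<longleftrightarrow>
     (\<forall>D. cell U D \<longrightarrow> cell V (F D)) \<and>
     (\<forall>D E. cell U D \<longrightarrow> cell U E \<longrightarrow> isoover D E \<longrightarrow> isoover (F D) (F E)) \<and>
     (\<forall>D a k. cell U D \<longrightarrow> isoover (F (bdcell a k D)) (bdcell a k (F D))) \<and>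
     (\<forall>k H D1 D2. composite U k H D1 D2 \<longrightarrow> composite V k (F H) (F D1) (F D2))"

text \<open>Active: F(id_U) = id_V; id_U is represented by any isomorphism onto U.\<close>
definition active ::
  "'b ogp \<Rightarrow> 'c ogp \<Rightarrow> ((nat, 'b) pd \<Rightarrow> (nat, 'c) pd) \<Rightarrow> bool" where
  "active U V F \<longleftrightarrow> (\<forall>D. cell U D \<longrightarrow> ogiso (fst D) (snd D) U \<longrightarrow>
                         ogiso (fst (F D)) (snd (F D)) V)"

end

theory Submission
  imports Defs
begin

text \<open>Induct on the generation of \<open>\<iota>\<close> as a submolecule inclusion. Since \<open>F\<close> respects
  isomorphism over \<open>U\<close>, isomorphisms go to isomorphisms and composites to composites. Since
  \<open>F\<close> preserves pastings, the inclusion of a factor of \<open>P #\<^sub>k Q\<close> goes to the inclusion of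
  a factor of a pasting; these factors are molecules because molecules are invariant under
  isomorphism. Cells of \<open>Mol/V\<close> are only determined up to isomorphism over \<open>V\<close>, so the
  induction carries submolecule inclusions compatible with the maps to the base. Finally,
  activity makes \<open>F(id\<^sub>U)\<close> an isomorphism onto \<open>V\<close>.\<close>

lemma molecule_ogpos: "molecule P \<Longrightarrow> ogpos P"
  by (induction rule: molecule.induct) auto

lemma ogpos_faces_subset: "ogpos P \<Longrightarrow> x \<in> els P \<Longrightarrow> faces P x \<subseteq> els P"
  unfolding ogpos_def by blast

lemma ogpos_inp_subset: "ogpos P \<Longrightarrow> x \<in> els P \<Longrightarrow> inp P x \<subseteq> els P"
  unfolding ogpos_def faces_def by blast

lemma ogpos_outp_subset: "ogpos P \<Longrightarrow> x \<in> els P \<Longrightarrow> outp P x \<subseteq> els P"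
  unfolding ogpos_def faces_def by blast

lemma faces_s_subset_faces: "faces_s a P x \<subseteq> faces P x"
  unfolding faces_s_def faces_def by (cases a) auto

lemma grading_unique:
  assumes "ogpos P" "grading P d" "grading P d'" "x \<in> els P"
  shows "d x = d' x"
  using assms(4)
proof (induction "d x" arbitrary: x rule: less_induct)
  case less
  show ?case
  proof (cases "faces P x = {}")
    case True
    then show ?thesis using assms(2,3) less.prems unfolding grading_def by auto
  next
    case False
    then obtain y where y: "y \<in> faces P x" by blast
    then have "y \<in> els P" using ogpos_faces_subset[OF assms(1) less.prems] by blast
    moreover have "d x = Suc (d y)" and "d' x = Suc (d' y)"
      using assms(2,3) less.prems y unfolding grading_def by auto
    moreover from this(1) have "d y < d x" by simp
    ultimately have "d y = d' y" using less.hyps by blast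
    with \<open>d x = Suc (d y)\<close> \<open>d' x = Suc (d' y)\<close> show ?thesis by simp
  qed
qed

lemma grading_dim: "ogpos P \<Longrightarrow> grading P (dim P)"
  unfolding ogpos_def dim_def using someI_ex[of "grading P"] by blast

lemma dim_eq_grading: "ogpos P \<Longrightarrow> grading P d \<Longrightarrow> x \<in> els P \<Longrightarrow> dim P x = d x"
  by (rule grading_unique[OF _ grading_dim])

lemma cl_subset:
  assumes "ogpos P" "S \<subseteq> els P"
  shows "cl P S \<subseteq> els P"
proof
  fix y assume "y \<in> cl P S"
  then obtain x where "x \<in> S" "(y, x) \<in> (facerel P)\<^sup>*" unfolding cl_def by blast
  from this(2) show "y \<in> els P"
  proof (induction rule: converse_rtrancl_induct)
    case base
    then show ?case using \<open>x \<in> S\<close> assms(2) by blast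
  next
    case (step a b)
    then show ?case using ogpos_faces_subset[OF assms(1)] unfolding facerel_def by blast
  qed
qed

lemma bd_subset: "ogpos P \<Longrightarrow> bd a n P \<subseteq> els P"
  unfolding bd_def using cl_subset[of P] unfolding Delta_def maxel_def by auto

lemma restr_simps [simp]:
  "els (restr P A) = A"
  "inp (restr P A) x = (if x \<in> A then inp P x else {})"
  "outp (restr P A) x = (if x \<in> A then outp P x else {})"
  by (auto simp: restr_def)

lemma faces_restr [simp]: "faces (restr P A) x = (if x \<in> A then faces P x else {})"
  by (auto simp: faces_def)

lemma ogpos_restr:
  assumes "ogpos P" "closed_in P A"
  shows "ogpos (restr P A)"
proof -
  obtain d where "grading P d" using assms(1) unfolding ogpos_def by blast
  then have "grading (restr P A) d" using assms(2) unfolding grading_def closed_in_def by auto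
  moreover have "finite A" using assms unfolding ogpos_def closed_in_def by (meson finite_subset)
  ultimately show ?thesis using assms unfolding ogpos_def closed_in_def by auto
qed

section \<open>Morphisms and isomorphisms\<close>

lemma ogiso_id: "ogiso P id P"
  unfolding ogiso_def ogmorph_def by simp

lemma ogmorph_comp:
  assumes "ogmorph W f X" "ogmorph X g U"
  shows "ogmorph W (g \<circ> f) U"
  unfolding ogmorph_def
proof
  fix x assume x: "x \<in> els W"
  have f: "f x \<in> els X" "bij_betw f (inp W x) (inp X (f x))" "bij_betw f (outp W x) (outp X (f x))"
    using assms(1) x unfolding ogmorph_def by blast+
  have g: "g (f x) \<in> els U" "bij_betw g (inp X (f x)) (inp U (g (f x)))"
    "bij_betw g (outp X (f x)) (outp U (g (f x)))"
    using assms(2) f(1) unfolding ogmorph_def by blast+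
  show "(g \<circ> f) x \<in> els U \<and> bij_betw (g \<circ> f) (inp W x) (inp U ((g \<circ> f) x)) \<and>
        bij_betw (g \<circ> f) (outp W x) (outp U ((g \<circ> f) x))"
    using g(1) bij_betw_trans[OF f(2) g(2)] bij_betw_trans[OF f(3) g(3)] by simp
qed

lemma ogmorph_cong:
  assumes "ogpos P" "ogmorph P f Q" "\<And>x. x \<in> els P \<Longrightarrow> g x = f x"
  shows "ogmorph P g Q"
  unfolding ogmorph_def
proof
  fix x assume x: "x \<in> els P"
  have f: "f x \<in> els Q" "bij_betw f (inp P x) (inp Q (f x))" "bij_betw f (outp P x) (outp Q (f x))"
    using assms(2) x unfolding ogmorph_def by blast+
  have "bij_betw g (inp P x) (inp Q (f x))"
    using f(2) bij_betw_cong[of "inp P x" g f] ogpos_inp_subset[OF assms(1) x] assms(3) by blast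
  moreover have "bij_betw g (outp P x) (outp Q (f x))"
    using f(3) bij_betw_cong[of "outp P x" g f] ogpos_outp_subset[OF assms(1) x] assms(3) by blast
  ultimately
  show "g x \<in> els Q \<and> bij_betw g (inp P x) (inp Q (g x)) \<and> bij_betw g (outp P x) (outp Q (g x))"
    using f(1) assms(3)[OF x] by simp
qed

lemma ogiso_cong:
  assumes "ogpos P" "ogiso P f Q" "\<And>x. x \<in> els P \<Longrightarrow> g x = f x"
  shows "ogiso P g Q"
proof -
  have "ogmorph P g Q" using assms ogmorph_cong unfolding ogiso_def by blast
  moreover have "bij_betw g (els P) (els Q)"
    using assms(2,3) bij_betw_cong[of "els P" g f] unfolding ogiso_def by blast
  ultimately show ?thesis unfolding ogiso_def by blast
qed

lemma ogiso_inv: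
  assumes "ogpos P" "ogiso P f Q"
  shows "ogiso Q (inv_into (els P) f) P"
proof -
  have bij: "bij_betw f (els P) (els Q)" using assms(2) unfolding ogiso_def by blast
  have "ogmorph Q (inv_into (els P) f) P" unfolding ogmorph_def
  proof
    fix y assume "y \<in> els Q"
    then obtain x where x: "x \<in> els P" "y = f x" using bij_betw_imp_surj_on[OF bij] by blast
    then have inv: "inv_into (els P) f y = x" using bij_betw_imp_inj_on[OF bij] by simp
    have "bij_betw f (inp P x) (inp Q y)" "bij_betw f (outp P x) (outp Q y)"
      using assms(2) x unfolding ogiso_def ogmorph_def by blast+
    then have "bij_betw (inv_into (els P) f) (inp Q y) (inp P x)"
      "bij_betw (inv_into (els P) f) (outp Q y) (outp P x)"
      using bij_betw_inv_into_subset[OF bij ogpos_inp_subset[OF assms(1) x(1)]]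
        bij_betw_inv_into_subset[OF bij ogpos_outp_subset[OF assms(1) x(1)]]
      by (simp_all add: bij_betw_imp_surj_on)
    then show "inv_into (els P) f y \<in> els P \<and>
        bij_betw (inv_into (els P) f) (inp Q y) (inp P (inv_into (els P) f y)) \<and>
        bij_betw (inv_into (els P) f) (outp Q y) (outp P (inv_into (els P) f y))"
      using inv x by simp
  qed
  then show ?thesis unfolding ogiso_def using bij_betw_inv_into[OF bij] by blast
qed

lemma ogmorph_restr:
  assumes "closed_in P A" "ogmorph P g U"
  shows "ogmorph (restr P A) g U"
  using assms unfolding ogmorph_def closed_in_def by auto

section \<open>Invariance under isomorphism\<close>

lemma image_eq_by_mem_iff:
  assumes "inj_on f X" "f ` X = Y" "A \<subseteq> X" "B \<subseteq> Y" "\<And>x. x \<in> X \<Longrightarrow> f x \<in> B \<longleftrightarrow> x \<in> A"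
  shows "B = f ` A"
  using assms by blast

locale og_isomorphism =
  fixes P :: "'a ogp" and Q :: "'b ogp" and f :: "'a \<Rightarrow> 'b"
  assumes ogpos_dom: "ogpos P" and ogpos_cod: "ogpos Q" and iso: "ogiso P f Q"
begin

lemma inj: "inj_on f (els P)"
  using iso unfolding ogiso_def bij_betw_def by blast

lemma els_image: "f ` els P = els Q"
  using iso unfolding ogiso_def bij_betw_def by blast

lemma mem_els: "x \<in> els P \<Longrightarrow> f x \<in> els Q"
  using els_image by blast

lemma inp_image: "x \<in> els P \<Longrightarrow> inp Q (f x) = f ` inp P x"
  using iso unfolding ogiso_def ogmorph_def by (metis bij_betw_imp_surj_on)

lemma outp_image: "x \<in> els P \<Longrightarrow> outp Q (f x) = f ` outp P x"
  using iso unfolding ogiso_def ogmorph_def by (metis bij_betw_imp_surj_on)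

lemma faces_image: "x \<in> els P \<Longrightarrow> faces Q (f x) = f ` faces P x"
  by (simp add: faces_def inp_image outp_image image_Un)

lemma faces_s_image: "x \<in> els P \<Longrightarrow> faces_s a Q (f x) = f ` faces_s a P x"
  by (cases a) (simp_all add: faces_s_def inp_image outp_image)

lemma mem_faces_s_iff:
  assumes "x \<in> els P" "w \<in> els P"
  shows "f x \<in> faces_s a Q (f w) \<longleftrightarrow> x \<in> faces_s a P w"
proof -
  have "faces_s a P w \<subseteq> els P"
    using ogpos_faces_subset[OF ogpos_dom assms(2)] faces_s_subset_faces[of a P w] by blast
  then show ?thesis unfolding faces_s_image[OF assms(2)] by (rule inj_on_image_mem_iff[OF inj assms(1)])
qed

lemma mem_faces_iff:
  assumes "x \<in> els P" "w \<in> els P"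
  shows "f x \<in> faces Q (f w) \<longleftrightarrow> x \<in> faces P w"
  using mem_faces_s_iff[OF assms, of Mn] mem_faces_s_iff[OF assms, of Pl]
  by (simp add: faces_def faces_s_def)

lemma dim_image:
  assumes "x \<in> els P"
  shows "dim Q (f x) = dim P x"
proof -
  let ?d = "dim P \<circ> inv_into (els P) f"
  have inv: "\<And>z. z \<in> els P \<Longrightarrow> ?d (f z) = dim P z" using inj by simp
  have "grading Q ?d" unfolding grading_def
  proof
    fix y assume "y \<in> els Q"
    then obtain x where x: "x \<in> els P" "y = f x" using els_image by blast
    have "faces P x = {} \<Longrightarrow> dim P x = 0" "\<And>z. z \<in> faces P x \<Longrightarrow> dim P x = Suc (dim P z)"
      using grading_dim[OF ogpos_dom] x(1) unfolding grading_def by auto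
    moreover have "faces P x \<subseteq> els P" using ogpos_faces_subset[OF ogpos_dom x(1)] .
    ultimately show "(faces Q y = {} \<longrightarrow> ?d y = 0) \<and> (\<forall>z\<in>faces Q y. ?d y = Suc (?d z))"
      using x inv faces_image by auto
  qed
  then show ?thesis using dim_eq_grading[OF ogpos_cod] mem_els assms inv by simp
qed

lemma facerel_rtrancl_image:
  assumes "(y, x) \<in> (facerel P)\<^sup>*" "x \<in> els P"
  shows "y \<in> els P \<and> (f y, f x) \<in> (facerel Q)\<^sup>*"
  using assms(1)
proof (induction rule: converse_rtrancl_induct)
  case base
  then show ?case using assms(2) by simp
next
  case (step a b)
  then have b: "b \<in> els P" "a \<in> faces P b" unfolding facerel_def by auto
  then have a: "a \<in> els P" using ogpos_faces_subset[OF ogpos_dom] by blast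
  have "(f a, f b) \<in> facerel Q"
    using mem_faces_iff[OF a b(1)] b mem_els[OF b(1)] unfolding facerel_def by simp
  then show ?case using a step.IH by (blast intro: converse_rtrancl_into_rtrancl)
qed

lemma facerel_rtrancl_preimage:
  assumes "(y', f x) \<in> (facerel Q)\<^sup>*" "x \<in> els P"
  shows "\<exists>y\<in>els P. y' = f y \<and> (y, x) \<in> (facerel P)\<^sup>*"
  using assms(1)
proof (induction rule: converse_rtrancl_induct)
  case base
  then show ?case using assms(2) by blast
next
  case (step a b)
  then obtain w where w: "w \<in> els P" "b = f w" "(w, x) \<in> (facerel P)\<^sup>*" by blast
  have "a \<in> faces Q (f w)" using step(1) w unfolding facerel_def by auto
  then obtain v where v: "v \<in> faces P w" "a = f v" using faces_image w by auto
  have "v \<in> els P" using v(1) ogpos_faces_subset[OF ogpos_dom w(1)] by blast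
  moreover have "(v, w) \<in> facerel P" using v(1) w(1) unfolding facerel_def by simp
  then have "(v, x) \<in> (facerel P)\<^sup>*" using w(3) by (rule converse_rtrancl_into_rtrancl)
  ultimately show ?case using v(2) by blast
qed

lemma cl_image:
  assumes "S \<subseteq> els P"
  shows "cl Q (f ` S) = f ` cl P S"
proof (rule image_eq_by_mem_iff[OF inj els_image cl_subset[OF ogpos_dom assms] cl_subset[OF ogpos_cod]])
  show "f ` S \<subseteq> els Q" using assms els_image by blast
  fix x assume x: "x \<in> els P"
  show "f x \<in> cl Q (f ` S) \<longleftrightarrow> x \<in> cl P S"
  proof
    assume "f x \<in> cl Q (f ` S)"
    then obtain s where s: "s \<in> S" "(f x, f s) \<in> (facerel Q)\<^sup>*" unfolding cl_def by blast
    moreover have "s \<in> els P" using s(1) assms by blast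
    ultimately obtain y where y: "y \<in> els P" "f x = f y" "(y, s) \<in> (facerel P)\<^sup>*"
      using facerel_rtrancl_preimage by blast
    then have "x = y" using inj x by (meson inj_onD)
    then show "x \<in> cl P S" using y(3) s(1) unfolding cl_def by blast
  next
    assume "x \<in> cl P S"
    then obtain s where s: "s \<in> S" "(x, s) \<in> (facerel P)\<^sup>*" unfolding cl_def by blast
    then show "f x \<in> cl Q (f ` S)"
      using facerel_rtrancl_image[OF s(2)] assms unfolding cl_def by blast
  qed
qed

lemma maxel_image: "maxel Q = f ` maxel P"
proof (rule image_eq_by_mem_iff[OF inj els_image])
  show "maxel P \<subseteq> els P" "maxel Q \<subseteq> els Q" unfolding maxel_def by auto
  fix x assume x: "x \<in> els P"
  have "(\<forall>y\<in>els Q. f x \<notin> faces Q y) \<longleftrightarrow> (\<forall>y\<in>els P. f x \<notin> faces Q (f y))"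
    by (simp add: els_image[symmetric])
  also have "\<dots> \<longleftrightarrow> (\<forall>y\<in>els P. x \<notin> faces P y)" using mem_faces_iff x by auto
  finally show "f x \<in> maxel Q \<longleftrightarrow> x \<in> maxel P" using x mem_els unfolding maxel_def by auto
qed

lemma Delta_image: "Delta a n Q = f ` Delta a n P"
proof (rule image_eq_by_mem_iff[OF inj els_image])
  show "Delta a n P \<subseteq> els P" "Delta a n Q \<subseteq> els Q" unfolding Delta_def by auto
  fix x assume x: "x \<in> els P"
  have "(\<forall>y\<in>els Q. f x \<notin> faces_s (neg a) Q y) \<longleftrightarrow> (\<forall>y\<in>els P. f x \<notin> faces_s (neg a) Q (f y))"
    by (simp add: els_image[symmetric])
  also have "\<dots> \<longleftrightarrow> (\<forall>y\<in>els P. x \<notin> faces_s (neg a) P y)" using mem_faces_s_iff x by auto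
  finally show "f x \<in> Delta a n Q \<longleftrightarrow> x \<in> Delta a n P"
    using x mem_els dim_image unfolding Delta_def by auto
qed

lemma bd_image: "bd a n Q = f ` bd a n P"
proof -
  have maxel_els: "maxel P \<subseteq> els P" unfolding maxel_def by auto
  have "{x \<in> maxel Q. dim Q x < n} = f ` {x \<in> maxel P. dim P x < n}"
    using maxel_image maxel_els dim_image by auto
  moreover have "Delta a n P \<subseteq> els P" unfolding Delta_def by auto
  ultimately show ?thesis
    unfolding bd_def Delta_image using cl_image maxel_els by (simp add: image_Un subset_iff)
qed

lemma pdim_eq: "pdim Q = pdim P"
proof -
  have "dim Q ` els Q = dim P ` els P"
    unfolding els_image[symmetric] image_image by (rule image_cong) (simp_all add: dim_image)
  then show ?thesis unfolding pdim_def by simp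
qed

lemma bdry_image: "bdry a Q = f ` bdry a P"
  unfolding bdry_def pdim_eq using bd_image by simp

lemma round_iff: "round Q \<longleftrightarrow> round P"
proof -
  have bd_els: "\<And>a n. bd a n P \<subseteq> els P" using bd_subset[OF ogpos_dom] .
  have "bd Mn n Q \<inter> bd Pl n Q = (if n = 0 then {} else bd Mn (n - 1) Q \<union> bd Pl (n - 1) Q)
     \<longleftrightarrow> bd Mn n P \<inter> bd Pl n P = (if n = 0 then {} else bd Mn (n - 1) P \<union> bd Pl (n - 1) P)"
    for n
  proof -
    have "bd Mn n Q \<inter> bd Pl n Q = f ` (bd Mn n P \<inter> bd Pl n P)"
      using bd_image inj_on_image_Int[OF inj bd_els bd_els] by simp
    moreover have "(if n = 0 then {} else bd Mn (n - 1) Q \<union> bd Pl (n - 1) Q) =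
        f ` (if n = 0 then {} else bd Mn (n - 1) P \<union> bd Pl (n - 1) P)"
      using bd_image by (simp add: image_Un)
    moreover have "(if n = 0 then {} else bd Mn (n - 1) P \<union> bd Pl (n - 1) P) \<subseteq> els P"
      "bd Mn n P \<inter> bd Pl n P \<subseteq> els P" using bd_els by auto
    ultimately show ?thesis by (simp add: inj_on_image_eq_iff[OF inj])
  qed
  then show ?thesis unfolding round_def pdim_eq by simp
qed

lemma dim_level_image:
  "C \<subseteq> els P \<Longrightarrow> f ` {x \<in> C. dim P x = n} = {y \<in> f ` C. dim Q y = n}"
  using dim_image by auto

lemma image_Int_els:
  "A \<subseteq> els P \<Longrightarrow> B \<subseteq> els P \<Longrightarrow> f ` A \<inter> f ` B = f ` (A \<inter> B)"
  using inj_on_image_Int[OF inj] by simp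

lemma image_Un_eq_els_minus:
  assumes "t \<in> els P" "A \<union> B = els P - {t}"
  shows "f ` A \<union> f ` B = els Q - {f t}"
proof -
  have "f ` A \<union> f ` B = f ` (els P - {t})" using assms(2) by (simp add: image_Un[symmetric])
  also have "\<dots> = els Q - {f t}"
    using inj_on_image_set_diff[OF inj, of "els P" "{t}"] assms(1) els_image by simp
  finally show ?thesis .
qed

lemma closed_in_image: "closed_in P A \<Longrightarrow> closed_in Q (f ` A)"
  unfolding closed_in_def using els_image faces_image by blast

lemma restr_iso:
  assumes "closed_in P A"
  shows "og_isomorphism (restr P A) (restr Q (f ` A)) f"
proof
  show "ogpos (restr P A)" using ogpos_restr[OF ogpos_dom assms] .
  show "ogpos (restr Q (f ` A))" using ogpos_restr[OF ogpos_cod closed_in_image[OF assms]] .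
  have A: "A \<subseteq> els P" using assms unfolding closed_in_def by blast
  then have "bij_betw f A (f ` A)" using inj_on_subset[OF inj] by (simp add: inj_on_imp_bij_betw)
  moreover have "ogmorph (restr P A) f (restr Q (f ` A))"
    using iso A unfolding ogiso_def ogmorph_def by auto
  ultimately show "ogiso (restr P A) f (restr Q (f ` A))" unfolding ogiso_def by simp
qed

lemma is_paste_image:
  assumes "is_paste k P A B"
  shows "is_paste k Q (f ` A) (f ` B)"
proof -
  have cA: "closed_in P A" and cB: "closed_in P B"
    using assms unfolding is_paste_def by auto
  interpret A: og_isomorphism "restr P A" "restr Q (f ` A)" f using restr_iso[OF cA] .
  interpret B: og_isomorphism "restr P B" "restr Q (f ` B)" f using restr_iso[OF cB] .
  have "A \<subseteq> els P" "B \<subseteq> els P" using cA cB unfolding closed_in_def by auto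
  then have int: "f ` A \<inter> f ` B = f ` (A \<inter> B)" by (rule image_Int_els)
  show ?thesis unfolding is_paste_def
  proof (intro conjI)
    show "closed_in Q (f ` A)" "closed_in Q (f ` B)" using closed_in_image cA cB by auto
    show "f ` A \<union> f ` B = els Q"
      using assms els_image unfolding is_paste_def by (simp add: image_Un[symmetric])
    have "A \<inter> B = bd Pl k (restr P A)" "A \<inter> B = bd Mn k (restr P B)"
      using assms unfolding is_paste_def by auto
    then show "f ` A \<inter> f ` B = bd Pl k (restr Q (f ` A))"
      "f ` A \<inter> f ` B = bd Mn k (restr Q (f ` B))"
      unfolding int A.bd_image B.bd_image by simp_all
  qed
qed

end

lemma molecule_iso:
  "molecule P \<Longrightarrow> ogiso P f Q \<Longrightarrow> ogpos Q \<Longrightarrow> molecule Q"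
proof (induction P arbitrary: f Q rule: molecule.induct)
  case (point P x)
  interpret og_isomorphism P Q f using point by unfold_locales
  have "els Q = {f x}" "faces Q (f x) = {}" using els_image faces_image point by auto
  then show ?case by (rule molecule.point[OF ogpos_cod])
next
  case (paste P k A B)
  interpret og_isomorphism P Q f using paste by unfold_locales
  have cA: "closed_in P A" and cB: "closed_in P B" using paste.hyps(2) unfolding is_paste_def by auto
  interpret A: og_isomorphism "restr P A" "restr Q (f ` A)" f using restr_iso[OF cA] .
  interpret B: og_isomorphism "restr P B" "restr Q (f ` B)" f using restr_iso[OF cB] .
  show ?case
    using molecule.paste[OF ogpos_cod is_paste_image[OF paste.hyps(2)]]
      paste.IH A.iso A.ogpos_cod B.iso B.ogpos_cod by blast
next
  case (rewrite P t A B n)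
  interpret og_isomorphism P Q f using rewrite by unfold_locales
  have cA: "closed_in P A" and cB: "closed_in P B" using rewrite by auto
  interpret A: og_isomorphism "restr P A" "restr Q (f ` A)" f using restr_iso[OF cA] .
  interpret B: og_isomorphism "restr P B" "restr Q (f ` B)" f using restr_iso[OF cB] .
  have AB: "A \<subseteq> els P" "B \<subseteq> els P" using cA cB unfolding closed_in_def by auto
  have int: "f ` A \<inter> f ` B = bdry Mn (restr Q (f ` A)) \<union> bdry Pl (restr Q (f ` A))"
    using rewrite image_Int_els[OF AB] A.bdry_image by (simp add: image_Un)
  have io: "inp Q (f t) = {y \<in> f ` A. dim Q y = n}" "outp Q (f t) = {y \<in> f ` B. dim Q y = n}"
    using inp_image[OF rewrite(2)] outp_image[OF rewrite(2)] rewrite dim_level_image AB by simp_all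
  show ?case
  proof (rule molecule.rewrite[OF ogpos_cod mem_els[OF rewrite(2)]
        closed_in_image[OF cA] closed_in_image[OF cB] image_Un_eq_els_minus[OF rewrite(2,5)]
        _ _ _ _ _ _ _ _ int io])
    show "molecule (restr Q (f ` A))" "molecule (restr Q (f ` B))"
      using rewrite.IH A.iso A.ogpos_cod B.iso B.ogpos_cod by blast+
    show "round (restr Q (f ` A))" "round (restr Q (f ` B))"
      using A.round_iff B.round_iff rewrite by auto
    show "pdim (restr Q (f ` A)) = n" "pdim (restr Q (f ` B)) = n"
      using A.pdim_eq B.pdim_eq rewrite by auto
    show "bdry Mn (restr Q (f ` A)) = bdry Mn (restr Q (f ` B))"
      "bdry Pl (restr Q (f ` A)) = bdry Pl (restr Q (f ` B))"
      using A.bdry_image B.bdry_image rewrite by auto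
  qed
qed

section \<open>Submolecule inclusions\<close>

lemma subinclD: "subincl W f X \<Longrightarrow> molecule W \<and> molecule X \<and> ogmorph W f X"
proof (induction rule: subincl.induct)
  case (iso W U f)
  then show ?case unfolding ogiso_def by blast
next
  case (comp W f X g U)
  then show ?case using ogmorph_comp by blast
next
  case (inl P k A B)
  then have "closed_in P A" unfolding is_paste_def by blast
  then show ?case using molecule.paste[OF inl.hyps] ogmorph_restr[of P A id P] ogiso_id inl.hyps(3)
    unfolding ogiso_def by blast
next
  case (inr P k A B)
  then have "closed_in P B" unfolding is_paste_def by blast
  then show ?case using molecule.paste[OF inr.hyps] ogmorph_restr[of P B id P] ogiso_id inr.hyps(4)
    unfolding ogiso_def by blast
qed

text \<open>Maps are total functions on \<open>nat\<close>, so a submolecule inclusion must be shown to be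
  arbitrary off its domain. Points outside \<open>els W\<close> are first pushed beyond every element
  of \<open>X\<close>, where an automorphism of \<open>X\<close> may send them to any prescribed value.\<close>

lemma subincl_id_cong:
  fixes k :: "nat \<Rightarrow> nat"
  assumes sub: "subincl W id X" and k: "\<And>x. x \<in> els W \<Longrightarrow> k x = x"
  shows "subincl W k X"
proof -
  have mol: "molecule W" "molecule X" "ogmorph W id X" using subinclD[OF sub] by auto
  have WX: "\<forall>x\<in>els W. id x \<in> els X" using mol(3) unfolding ogmorph_def by blast
  have "finite (els X)" using molecule_ogpos[OF mol(2)] unfolding ogpos_def by blast
  then obtain c where c: "\<forall>y\<in>els X. y < c" unfolding finite_nat_set_iff_bounded ..
  define e where "e x = (if x \<in> els W then x else x + c)" for x
  define E where "E y = (if y \<in> els X then y else k (y - c))" for y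
  have "ogiso W e W" by (rule ogiso_cong[OF molecule_ogpos[OF mol(1)] ogiso_id]) (simp add: e_def)
  then have "subincl W (id \<circ> e) X" by (rule subincl.comp[OF subincl.iso[OF mol(1,1)] sub])
  moreover have "ogiso X E X" by (rule ogiso_cong[OF molecule_ogpos[OF mol(2)] ogiso_id]) (simp add: E_def)
  with mol(2) have "subincl X E X" by (intro subincl.iso)
  ultimately have "subincl W (E \<circ> (id \<circ> e)) X" by (rule subincl.comp)
  moreover have "E \<circ> (id \<circ> e) = k"
  proof
    fix x
    have "x + c \<notin> els X" using c by auto
    then show "(E \<circ> (id \<circ> e)) x = k x" using k WX by (auto simp: e_def E_def)
  qed
  ultimately show ?thesis by simp
qed

lemma subincl_cong:
  fixes k :: "nat \<Rightarrow> nat"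
  assumes "subincl W f X" "\<And>x. x \<in> els W \<Longrightarrow> k x = f x"
  shows "subincl W k X"
  using assms
proof (induction arbitrary: k rule: subincl.induct)
  case (iso W U f)
  then show ?case using ogiso_cong[OF molecule_ogpos] subincl.iso by blast
next
  case (comp W f X g U)
  have mol: "molecule W" "molecule X" "ogmorph W f X" using subinclD[OF comp.hyps(1)] by auto
  then have "finite (els X)" using molecule_ogpos unfolding ogpos_def by blast
  then obtain c where c: "\<forall>y\<in>els X. y < c" unfolding finite_nat_set_iff_bounded ..
  define f' where "f' x = (if x \<in> els W then f x else x + c)" for x
  define g' where "g' y = (if y \<in> els X then g y else k (y - c))" for y
  have "subincl W f' X" by (rule comp.IH(1)) (simp add: f'_def)
  moreover have "subincl X g' U" by (rule comp.IH(2)) (simp add: g'_def)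
  ultimately have "subincl W (g' \<circ> f') U" by (rule subincl.comp)
  moreover have "g' \<circ> f' = k"
  proof
    fix x
    have "x + c \<notin> els X" using c by auto
    moreover have "x \<in> els W \<Longrightarrow> f x \<in> els X" using mol(3) unfolding ogmorph_def by blast
    ultimately show "(g' \<circ> f') x = k x" using comp.prems by (auto simp: f'_def g'_def)
  qed
  ultimately show ?case by simp
next
  case (inl P n A B)
  then show ?case using subincl_id_cong[OF subincl.inl[OF inl.hyps]] by simp
next
  case (inr P n A B)
  then show ?case using subincl_id_cong[OF subincl.inr[OF inr.hyps]] by simp
qed

section \<open>Pasting diagrams over a base\<close>

definition subincl_over :: "('a, 'b) pd \<Rightarrow> ('a, 'b) pd \<Rightarrow> bool" where
  "subincl_over D E \<longleftrightarrow>
     (\<exists>j. subincl (fst D) j (fst E) \<and> (\<forall>z\<in>els (fst D). snd E (j z) = snd D z))"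

lemma subincl_over_trans [trans]:
  assumes "subincl_over D E" "subincl_over E G"
  shows "subincl_over D G"
proof -
  obtain j where j: "subincl (fst D) j (fst E)" "\<forall>z\<in>els (fst D). snd E (j z) = snd D z"
    using assms(1) unfolding subincl_over_def by blast
  obtain j' where j': "subincl (fst E) j' (fst G)" "\<forall>z\<in>els (fst E). snd G (j' z) = snd E z"
    using assms(2) unfolding subincl_over_def by blast
  have "\<forall>z\<in>els (fst D). j z \<in> els (fst E)" using subinclD[OF j(1)] unfolding ogmorph_def by blast
  then have "\<forall>z\<in>els (fst D). snd G ((j' \<circ> j) z) = snd D z" using j(2) j'(2) by simp
  then show ?thesis using subincl.comp[OF j(1) j'(1)] unfolding subincl_over_def by blast
qed

lemma isoover_refl: "isoover D D"
  unfolding isoover_def using ogiso_id by fastforce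

lemma isoover_sym:
  assumes "ogpos (fst D)" "isoover D E"
  shows "isoover E D"
proof -
  obtain \<phi> where \<phi>: "ogiso (fst D) \<phi> (fst E)" "\<forall>x\<in>els (fst D). snd E (\<phi> x) = snd D x"
    using assms(2) unfolding isoover_def by blast
  let ?\<psi> = "inv_into (els (fst D)) \<phi>"
  have "bij_betw \<phi> (els (fst D)) (els (fst E))" using \<phi>(1) unfolding ogiso_def by blast
  then have "\<forall>y\<in>els (fst E). snd D (?\<psi> y) = snd E y"
    using \<phi>(2) by (metis bij_betw_imp_surj_on f_inv_into_f inv_into_into)
  then show ?thesis using ogiso_inv[OF assms(1) \<phi>(1)] unfolding isoover_def by blast
qed

lemma isoover_imp_subincl_over:
  assumes "molecule (fst D)" "molecule (fst E)" "isoover D E"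
  shows "subincl_over D E"
  using assms subincl.iso unfolding isoover_def subincl_over_def by blast

lemma molecule_of_isoover:
  assumes "isoover D E" "ogpos (fst D)" "molecule (fst E)"
  shows "molecule (fst D)"
  using isoover_sym[OF assms(2,1)] molecule_iso assms(2,3) unfolding isoover_def by blast

lemma composite_factors_subincl_over:
  assumes "composite V k H D1 D2"
  shows "subincl_over D1 H" and "subincl_over D2 H"
proof -
  obtain A B where AB: "is_paste k (fst H) A B"
    "isoover (restr (fst H) A, snd H) D1" "isoover (restr (fst H) B, snd H) D2"
    and cells: "cell V H" "cell V D1" "cell V D2"
    using assms unfolding composite_def by blast
  have mol: "molecule (fst H)" "molecule (fst D1)" "molecule (fst D2)"
    using cells unfolding cell_def by auto
  have og: "ogpos (fst H)" using molecule_ogpos[OF mol(1)] .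
  have og_restr: "ogpos (restr (fst H) A)" "ogpos (restr (fst H) B)"
    using AB(1) ogpos_restr[OF og] unfolding is_paste_def by auto
  have molA: "molecule (restr (fst H) A)" and molB: "molecule (restr (fst H) B)"
    using molecule_of_isoover[OF AB(2)] molecule_of_isoover[OF AB(3)] og_restr mol by auto
  have "subincl_over (restr (fst H) A, snd H) H" "subincl_over (restr (fst H) B, snd H) H"
    using subincl.inl[OF og AB(1) molA molB] subincl.inr[OF og AB(1) molA molB]
    unfolding subincl_over_def by auto
  moreover have "isoover D1 (restr (fst H) A, snd H)" "isoover D2 (restr (fst H) B, snd H)"
    using isoover_sym[of "(restr (fst H) A, snd H)"] isoover_sym[of "(restr (fst H) B, snd H)"]
      AB(2,3) og_restr by simp_all
  then have "subincl_over D1 (restr (fst H) A, snd H)" "subincl_over D2 (restr (fst H) B, snd H)"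
    using isoover_imp_subincl_over[of D1 "(restr (fst H) A, snd H)"]
      isoover_imp_subincl_over[of D2 "(restr (fst H) B, snd H)"] mol molA molB by simp_all
  ultimately show "subincl_over D1 H" "subincl_over D2 H" using subincl_over_trans by blast+
qed

section \<open>Strict functors preserve submolecule inclusions\<close>

context
  fixes U :: "'b ogp" and V :: "'c ogp" and F :: "(nat, 'b) pd \<Rightarrow> (nat, 'c) pd"
  assumes F: "strict_functor U V F"
begin

lemma F_cell: "cell U D \<Longrightarrow> cell V (F D)"
  using F unfolding strict_functor_def by blast

lemma F_isoover: "cell U D \<Longrightarrow> cell U E \<Longrightarrow> isoover D E \<Longrightarrow> isoover (F D) (F E)"
  using F unfolding strict_functor_def by blast

lemma F_composite: "composite U k H D1 D2 \<Longrightarrow> composite V k (F H) (F D1) (F D2)"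
  using F unfolding strict_functor_def by blast

lemma composite_of_is_paste:
  assumes "cell U (P, g)" "is_paste k P A B" "molecule (restr P A)" "molecule (restr P B)"
  shows "composite U k (P, g) (restr P A, g) (restr P B, g)"
proof -
  have "closed_in P A" "closed_in P B" using assms(2) unfolding is_paste_def by auto
  then have "cell U (restr P A, g)" "cell U (restr P B, g)"
    using assms(1,3,4) ogmorph_restr unfolding cell_def by auto
  then show ?thesis unfolding composite_def using assms(1,2) isoover_refl by fastforce
qed

lemma F_subincl_over:
  "subincl W \<iota> X \<Longrightarrow> cell U (X, g) \<Longrightarrow> subincl_over (F (W, g \<circ> \<iota>)) (F (X, g))"
proof (induction W \<iota> X arbitrary: g rule: subincl.induct)
  case (iso W X f)
  have cell_W: "cell U (W, g \<circ> f)"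
    using iso ogmorph_comp unfolding cell_def ogiso_def by auto
  moreover have "isoover (W, g \<circ> f) (X, g)" unfolding isoover_def using iso.hyps(3) by auto
  ultimately have "isoover (F (W, g \<circ> f)) (F (X, g))" using F_isoover iso.prems by blast
  moreover have "molecule (fst (F (W, g \<circ> f)))" "molecule (fst (F (X, g)))"
    using F_cell[OF cell_W] F_cell[OF iso.prems] unfolding cell_def by simp_all
  ultimately show ?case using isoover_imp_subincl_over by blast
next
  case (comp W f X h Y)
  have "cell U (X, g \<circ> h)"
    using comp.prems subinclD[OF comp.hyps(1)] subinclD[OF comp.hyps(2)] ogmorph_comp
    unfolding cell_def by auto
  then have "subincl_over (F (W, g \<circ> h \<circ> f)) (F (X, g \<circ> h))" by (rule comp.IH(1))
  also have "subincl_over (F (X, g \<circ> h)) (F (Y, g))" using comp.IH(2)[OF comp.prems] .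
  finally show ?case unfolding comp_assoc .
next
  case (inl P k A B)
  have "composite U k (P, g) (restr P A, g) (restr P B, g)"
    by (rule composite_of_is_paste[OF inl.prems inl.hyps(2-4)])
  then show ?case using composite_factors_subincl_over(1)[OF F_composite] by simp
next
  case (inr P k A B)
  have "composite U k (P, g) (restr P A, g) (restr P B, g)"
    by (rule composite_of_is_paste[OF inr.prems inr.hyps(2-4)])
  then show ?case using composite_factors_subincl_over(2)[OF F_composite] by simp
qed

end

theorem mainTheorem19:
  fixes U V W :: "nat ogp" and F :: "(nat, nat) pd \<Rightarrow> (nat, nat) pd"
    and \<iota> :: "nat \<Rightarrow> nat"
  assumes "molecule U" and "molecule V"
    and "strict_functor U V F" and "active U V F"
    and "subincl W \<iota> U"
  shows "subincl (fst (F (W, \<iota>))) (snd (F (W, \<iota>))) V"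
proof -
  have cell_id: "cell U (U, id)" using assms(1) ogiso_id unfolding cell_def ogiso_def by auto
  have "subincl_over (F (W, \<iota>)) (F (U, id))"
    using F_subincl_over[OF assms(3,5) cell_id] by simp
  also have "subincl_over (F (U, id)) (V, id)"
  proof -
    have "ogiso (fst (F (U, id))) (snd (F (U, id))) V"
      using assms(4) cell_id ogiso_id[of U] unfolding active_def by simp
    moreover have "molecule (fst (F (U, id)))" using F_cell[OF assms(3) cell_id] unfolding cell_def ..
    ultimately have "subincl (fst (F (U, id))) (snd (F (U, id))) V" using subincl.iso assms(2) by blast
    then show ?thesis unfolding subincl_over_def by auto
  qed
  finally obtain j where "subincl (fst (F (W, \<iota>))) j V"
    and "\<And>z. z \<in> els (fst (F (W, \<iota>))) \<Longrightarrow> snd (F (W, \<iota>)) z = j z"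
    unfolding subincl_over_def by auto
  then show ?thesis by (rule subincl_cong)
qed

end
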